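(* Let $\mu,\mu'$ be Borel probability measures on a separable metric space $X$, $\nu,\nu'$ Borel probability measures on a separable metric space $Y$, and $F\in\mathcal F^2$. Then for every $\lambda>0$, $$\pi^{(\lambda)}(\mu\otimes\nu,\mu'\otimes\nu')\le\max\Big\{\pi^{(\lambda)}(\mu,\mu')+\pi^{(\lambda)}(\nu,\nu'),\ 2F\big(\pi^{(\lambda)}(\mu,\mu'),\pi^{(\lambda)}(\nu,\nu')\big)\Big\},$$ where the left-hand side is computed on $X\times Y$ with the metric $d_F$.
   Context: $\mathcal F^2$: continuous $F\colon[0,+\infty)^2\to[0,+\infty)$ such that for all metric spaces $d_F((x,y),(x',y')):=F(d_X(x,x'),d_Y(y,y'))$ is a metric on $X\times Y$. For $A$ in a metric space and $r>0$, $U_r(A)=\{x:d(x,A)<r\}$. The $\lambda$-Prokhorov distance $\pi^{(\lambda)}(\mu,\nu)$ between Borel probability measures is the infimum of $\varepsilon>0$ such that $\mu(U_\varepsilon(A))\ge\nu(A)-\lambda\varepsilon$ for every Borel set $A$. *)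

theory Defs
  imports "HOL-Probability.Probability"
begin

definition borel_of :: "'a topology \<Rightarrow> 'a measure" where
  "borel_of T = sigma (topspace T) {U. openin T U}"

definition prod_metric_F ::
  "(real \<Rightarrow> real \<Rightarrow> real) \<Rightarrow> ('a \<Rightarrow> 'a \<Rightarrow> real) \<Rightarrow> ('b \<Rightarrow> 'b \<Rightarrow> real)
     \<Rightarrow> ('a \<times> 'b) \<Rightarrow> ('a \<times> 'b) \<Rightarrow> real" where
  "prod_metric_F F dX dY = (\<lambda>(x, y) (x', y'). F (dX x x') (dY y y'))"

text \<open>The class F^2: continuous F : [0,oo)^2 -> [0,oo) such that d_F is a metric on
  X x Y for all metric spaces X, Y.  Metric spaces are quantified over carriers in the
  type real.\<close>
definition F2 :: "(real \<Rightarrow> real \<Rightarrow> real) \<Rightarrow> bool" where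
  "F2 F \<longleftrightarrow>
     continuous_on ({0..} \<times> {0..}) (\<lambda>(a, b). F a b) \<and>
     (\<forall>a b. 0 \<le> a \<longrightarrow> 0 \<le> b \<longrightarrow> 0 \<le> F a b) \<and>
     (\<forall>(X :: real set) dX (Y :: real set) dY.
        Metric_space X dX \<and> Metric_space Y dY \<longrightarrow>
        Metric_space (X \<times> Y) (prod_metric_F F dX dY))"

definition nbhd :: "'a set \<Rightarrow> ('a \<Rightarrow> 'a \<Rightarrow> real) \<Rightarrow> 'a set \<Rightarrow> real \<Rightarrow> 'a set" where
  "nbhd S d A r = {x \<in> S. (INF a\<in>A. ereal (d x a)) < ereal r}"

definition prokhorov ::
  "real \<Rightarrow> 'a set \<Rightarrow> ('a \<Rightarrow> 'a \<Rightarrow> real) \<Rightarrow> 'a measure \<Rightarrow> 'a measure \<Rightarrow> real" where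
  "prokhorov l S d \<mu> \<nu> =
     Inf {\<epsilon>. \<epsilon> > 0 \<and>
        (\<forall>A \<in> sets (borel_of (Metric_space.mtopology S d)).
           measure \<mu> (nbhd S d A \<epsilon>) \<ge> measure \<nu> A - l * \<epsilon>)}"

end

theory Submission
  imports Defs
begin

text \<open>
  Let \<open>a\<close>, \<open>b\<close> be the two Prokhorov distances and fix \<open>\<epsilon> > a\<close>, \<open>\<delta> > b\<close>. For a
  product-measurable \<open>C\<close>, enlarge every section \<open>{y. (x, y) \<in> C}\<close> by \<open>\<delta>\<close> in \<open>Y\<close>; integrating
  the Prokhorov condition for \<open>\<nu>, \<nu>'\<close> over \<open>x\<close> (Fubini) trades \<open>\<mu>' \<Otimes> \<nu>'\<close> for \<open>\<mu>' \<Otimes> \<nu>\<close> at the cost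
  \<open>\<lambda>\<delta>\<close>. Enlarging the other sections by \<open>\<epsilon>\<close> in \<open>X\<close> trades \<open>\<mu>'\<close> for \<open>\<mu>\<close> at the cost \<open>\<lambda>\<epsilon>\<close>.
  The resulting set lies within \<open>d\<^sub>X\<close>-distance \<open>\<epsilon>\<close> and \<open>d\<^sub>Y\<close>-distance \<open>\<delta>\<close> of \<open>C\<close>.
  \<open>F\<close> need not be monotone, but the triangle inequality for \<open>d\<^sub>F\<close> on a product of two
  three-point spaces gives \<open>F u v \<le> 2 F u' v'\<close> whenever \<open>u \<le> 2u'\<close> and \<open>v \<le> 2v'\<close>; together with
  continuity of \<open>F\<close> this puts the set inside the \<open>d\<^sub>F\<close>-neighbourhood of \<open>C\<close> of radius
  \<open>2 F a b + \<eta>\<close>. Separability makes all the (open) enlargements product-measurable.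
\<close>

definition three_point_space :: "real \<Rightarrow> real set" where
  "three_point_space a = (if a = 0 then {0, 1} else {0, 1, 2})"

definition three_point_dist :: "real \<Rightarrow> real \<Rightarrow> real \<Rightarrow> real \<Rightarrow> real" where
  "three_point_dist a a' u v =
     (if u = v then 0 else if (u = 0 \<and> v = 2) \<or> (u = 2 \<and> v = 0) then a else a')"

lemma Metric_space_three_point:
  assumes "0 \<le> a" "a \<le> 2 * a'" "0 < a'"
  shows "Metric_space (three_point_space a) (three_point_dist a a')"
  by unfold_locales
    (use assms in \<open>auto simp: three_point_dist_def three_point_space_def split: if_splits\<close>)

lemma F2_le_twice:
  assumes "F2 F" and "0 \<le> a" "a \<le> 2 * a'" "0 < a'" and "0 \<le> b" "b \<le> 2 * b'" "0 < b'"
  shows "F a b \<le> 2 * F a' b'"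
proof -
  let ?d = "prod_metric_F F (three_point_dist a a') (three_point_dist b b')"
  have "Metric_space (three_point_space a \<times> three_point_space b) ?d"
    using assms Metric_space_three_point[of a a'] Metric_space_three_point[of b b']
    unfolding F2_def by blast
  then interpret M: Metric_space "three_point_space a \<times> three_point_space b" ?d .
  define p where "p = (if a = 0 then 0 else 2::real)"
  define q where "q = (if b = 0 then 0 else 2::real)"
  have "?d (0, 0) (p, q) \<le> ?d (0, 0) (1, 1) + ?d (1, 1) (p, q)"
    by (rule M.triangle) (auto simp: three_point_space_def p_def q_def)
  then show ?thesis
    by (simp add: prod_metric_F_def three_point_dist_def p_def q_def split: if_splits)
qed

lemma F2_less_nearby:
  assumes "F2 F" and "0 \<le> a" "0 \<le> b" and "F a b < c"
  obtains r where "r > 0"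
    and "\<And>u v. 0 \<le> u \<Longrightarrow> 0 \<le> v \<Longrightarrow> \<bar>u - a\<bar> < r \<Longrightarrow> \<bar>v - b\<bar> < r \<Longrightarrow> F u v < c"
proof -
  have "continuous_on ({0..} \<times> {0..}) (\<lambda>(u, v). F u v)" and "(a, b) \<in> {0..} \<times> {0..}"
    using assms unfolding F2_def by auto
  then obtain r where r: "r > 0" and near: "\<And>z. z \<in> {0..} \<times> {0..} \<Longrightarrow> dist z (a, b) < r \<Longrightarrow>
      dist ((\<lambda>(u, v). F u v) z) (F a b) < c - F a b"
    unfolding continuous_on_iff using \<open>F a b < c\<close> by (metis case_prod_conv diff_gt_0_iff_gt)
  show thesis
  proof (rule that[of "r / 2"])
    fix u v :: real assume uv: "0 \<le> u" "0 \<le> v" "\<bar>u - a\<bar> < r / 2" "\<bar>v - b\<bar> < r / 2"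
    have "dist (u, v) (a, b) \<le> \<bar>u - a\<bar> + \<bar>v - b\<bar>"
      using sqrt_sum_squares_le_sum_abs[of "u - a" "v - b"] by (simp add: dist_Pair_Pair dist_real_def)
    then have "dist (F u v) (F a b) < c - F a b"
      using near[of "(u, v)"] uv by simp
    then show "F u v < c" by (simp add: dist_real_def)
  qed (use r in simp)
qed

lemma nbhd_altdef: "nbhd S d A r = {x \<in> S. \<exists>a\<in>A. d x a < r}"
  unfolding nbhd_def by (simp add: INF_less_iff)

lemma nbhd_mono: "r \<le> s \<Longrightarrow> nbhd S d A r \<subseteq> nbhd S d A s"
  unfolding nbhd_altdef by force

lemma (in Metric_space) openin_nbhd:
  assumes "A \<subseteq> M"
  shows "openin mtopology (nbhd M d A r)"
  unfolding openin_mtopology nbhd_altdef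
proof safe
  fix x a assume x: "x \<in> M" "a \<in> A" "d x a < r"
  have "\<exists>a\<in>A. d y a < r" if "y \<in> mball x (r - d x a)" for y
    using that x assms triangle[of y x a] commute[of x y] by force
  then show "\<exists>e>0. mball x e \<subseteq> {x \<in> M. \<exists>a\<in>A. d x a < r}"
    using x by (intro exI[of _ "r - d x a"]) auto
qed

lemma openin_in_borel_of: "openin T U \<Longrightarrow> U \<in> sets (borel_of T)"
  unfolding borel_of_def by (rule in_measure_of) (auto dest: openin_subset)

lemma space_borel_of: "space (borel_of T) = topspace T"
  unfolding borel_of_def by (rule space_measure_of) (auto dest: openin_subset)

definition prokhorov_admissible ::
  "real \<Rightarrow> 'a set \<Rightarrow> ('a \<Rightarrow> 'a \<Rightarrow> real) \<Rightarrow> 'a measure \<Rightarrow> 'a measure \<Rightarrow> real \<Rightarrow> bool" where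
  "prokhorov_admissible l S d \<mu> \<nu> \<epsilon> \<longleftrightarrow> \<epsilon> > 0 \<and>
     (\<forall>A \<in> sets (borel_of (Metric_space.mtopology S d)).
        measure \<nu> A - l * \<epsilon> \<le> measure \<mu> (nbhd S d A \<epsilon>))"

lemma prokhorov_altdef:
  "prokhorov l S d \<mu> \<nu> = Inf (Collect (prokhorov_admissible l S d \<mu> \<nu>))"
  unfolding prokhorov_def prokhorov_admissible_def ..

lemma prokhorov_admissible_inverse:
  assumes "l > 0" and "prob_space \<nu>"
  shows "prokhorov_admissible l S d \<mu> \<nu> (1 / l)"
proof -
  have "measure \<nu> A - l * (1 / l) \<le> measure \<mu> B" for A B
  proof -
    have "measure \<nu> A \<le> 1" "0 \<le> measure \<mu> B" "l * (1 / l) = 1"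
      using assms prob_space.prob_le_1 by auto
    then show ?thesis by linarith
  qed
  then show ?thesis
    using assms by (simp add: prokhorov_admissible_def)
qed

lemma prokhorov_nonneg:
  assumes "l > 0" and "prob_space \<nu>"
  shows "0 \<le> prokhorov l S d \<mu> \<nu>"
proof -
  have "prokhorov_admissible l S d \<mu> \<nu> (1 / l)"
    by (rule prokhorov_admissible_inverse[OF assms])
  then have "Collect (prokhorov_admissible l S d \<mu> \<nu>) \<noteq> {}"
    by blast
  then show ?thesis
    unfolding prokhorov_altdef
    by (rule cInf_greatest) (simp add: prokhorov_admissible_def)
qed

lemma prokhorov_le:
  "prokhorov_admissible l S d \<mu> \<nu> c \<Longrightarrow> prokhorov l S d \<mu> \<nu> \<le> c"
  unfolding prokhorov_altdef
  by (rule cInf_lower) (auto intro: bdd_belowI[where m = 0] simp: prokhorov_admissible_def)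

lemma prokhorov_admissible_above:
  assumes "Metric_space S d" and "l > 0"
    and "prob_space \<mu>" "sets \<mu> = sets (borel_of (Metric_space.mtopology S d))"
    and "prob_space \<nu>"
    and "prokhorov l S d \<mu> \<nu> < e"
  shows "prokhorov_admissible l S d \<mu> \<nu> e"
proof -
  interpret S: Metric_space S d by fact
  interpret \<mu>: prob_space \<mu> by fact
  have "prokhorov_admissible l S d \<mu> \<nu> (1 / l)"
    by (rule prokhorov_admissible_inverse[OF assms(2,5)])
  then obtain s where s: "prokhorov_admissible l S d \<mu> \<nu> s" "s < e"
    using cInf_lessD[of "Collect (prokhorov_admissible l S d \<mu> \<nu>)" e] assms(6)
    unfolding prokhorov_altdef by blast
  have "measure \<nu> A - l * e \<le> measure \<mu> (nbhd S d A e)"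
    if A: "A \<in> sets (borel_of S.mtopology)" for A
  proof -
    have "A \<subseteq> S"
      using sets.sets_into_space[OF A] by (simp add: space_borel_of)
    then have "nbhd S d A e \<in> sets \<mu>"
      using assms(4) by (simp add: S.openin_nbhd openin_in_borel_of)
    then have "measure \<mu> (nbhd S d A s) \<le> measure \<mu> (nbhd S d A e)"
      using s(2) by (intro \<mu>.finite_measure_mono nbhd_mono) auto
    moreover have "measure \<nu> A - l * s \<le> measure \<mu> (nbhd S d A s)"
      using s(1) A by (simp add: prokhorov_admissible_def)
    moreover have "l * s \<le> l * e"
      using assms(2) s(2) by simp
    ultimately show ?thesis by linarith
  qed
  then show ?thesis
    using s assms(2) by (auto simp: prokhorov_admissible_def)
qed

lemma (in Metric_space) separable_dense_subset:
  assumes "separable_space mtopology"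
  obtains D where "countable D" "D \<subseteq> M" "\<And>x r. x \<in> M \<Longrightarrow> r > 0 \<Longrightarrow> \<exists>s\<in>D. d x s < r"
proof -
  obtain D where D: "countable D" "D \<subseteq> M" "mtopology closure_of D = M"
    using assms unfolding separable_space_def by auto
  have "\<exists>s\<in>D. d x s < r" if "x \<in> M" "r > 0" for x r
    using D(3) that unfolding metric_closure_of by auto
  with D show thesis
    using that by blast
qed

(* Openness in the product of the two metric topologies, needing no metric on the product. *)
definition box_open ::
  "'a set \<Rightarrow> ('a \<Rightarrow> 'a \<Rightarrow> real) \<Rightarrow> 'b set \<Rightarrow> ('b \<Rightarrow> 'b \<Rightarrow> real) \<Rightarrow> ('a \<times> 'b) set \<Rightarrow> bool" where
  "box_open X dX Y dY G \<longleftrightarrow> G \<subseteq> X \<times> Y \<and>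
     (\<forall>(x, y) \<in> G. \<exists>r>0. \<forall>x'\<in>X. \<forall>y'\<in>Y. dX x x' < r \<longrightarrow> dY y y' < r \<longrightarrow> (x', y') \<in> G)"

lemma box_openD:
  "box_open X dX Y dY G \<Longrightarrow> (x, y) \<in> G \<Longrightarrow>
    \<exists>r>0. \<forall>x'\<in>X. \<forall>y'\<in>Y. dX x x' < r \<longrightarrow> dY y y' < r \<longrightarrow> (x', y') \<in> G"
  unfolding box_open_def by blast

lemma box_open_swap:
  "box_open Y dY X dX (prod.swap ` G) \<longleftrightarrow> box_open X dX Y dY G"
  unfolding box_open_def by (auto 0 4)

context Metric_space12
begin

lemma box_open_in_sets_pair_measure:
  assumes "separable_space M1.mtopology" "separable_space M2.mtopology"
    and G: "box_open M1 d1 M2 d2 G"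
  shows "G \<in> sets (borel_of M1.mtopology \<Otimes>\<^sub>M borel_of M2.mtopology)"
proof -
  obtain D1 where D1: "countable D1" "D1 \<subseteq> M1" "\<And>x r. x \<in> M1 \<Longrightarrow> r > 0 \<Longrightarrow> \<exists>s\<in>D1. d1 x s < r"
    using M1.separable_dense_subset assms(1) by blast
  obtain D2 where D2: "countable D2" "D2 \<subseteq> M2" "\<And>y r. y \<in> M2 \<Longrightarrow> r > 0 \<Longrightarrow> \<exists>t\<in>D2. d2 y t < r"
    using M2.separable_dense_subset assms(2) by blast
  define I where "I = {(s, t, q). s \<in> D1 \<and> t \<in> D2 \<and> q \<in> \<rat> \<and> M1.mball s q \<times> M2.mball t q \<subseteq> G}"
  have "I \<subseteq> D1 \<times> D2 \<times> \<rat>" "countable (D1 \<times> D2 \<times> (\<rat> :: real set))"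
    unfolding I_def using D1(1) D2(1) countable_rat by auto
  then have "countable I"
    by (rule countable_subset)
  have "(x, y) \<in> (\<Union>(s, t, q)\<in>I. M1.mball s q \<times> M2.mball t q)" if xyG: "(x, y) \<in> G" for x y
  proof -
    have xy: "x \<in> M1" "y \<in> M2"
      using G xyG by (auto simp: box_open_def)
    obtain r where r: "r > 0"
      and box: "\<forall>x'\<in>M1. \<forall>y'\<in>M2. d1 x x' < r \<longrightarrow> d2 y y' < r \<longrightarrow> (x', y') \<in> G"
      using box_openD[OF G xyG] by blast
    obtain q where q: "q \<in> \<rat>" "0 < q" "q < r / 2"
      using r Rats_dense_in_real[of 0 "r / 2"] by auto
    obtain s where s: "s \<in> D1" "d1 x s < q" using D1(3) xy q by blast
    obtain t where t: "t \<in> D2" "d2 y t < q" using D2(3) xy q by blast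
    have "(a, b) \<in> G" if "a \<in> M1.mball s q" "b \<in> M2.mball t q" for a b
    proof -
      have "d1 x a \<le> d1 x s + d1 s a" "d2 y b \<le> d2 y t + d2 t b"
        using M1.triangle M2.triangle xy s t D1(2) D2(2) that by auto
      then show ?thesis
        using box s t q that by auto
    qed
    then have "(s, t, q) \<in> I"
      using s t q by (auto simp: I_def)
    moreover have "(x, y) \<in> M1.mball s q \<times> M2.mball t q"
      using xy s t D1(2) D2(2) M1.commute M2.commute by auto
    ultimately show ?thesis
      by blast
  qed
  moreover have "(\<Union>(s, t, q)\<in>I. M1.mball s q \<times> M2.mball t q) \<subseteq> G"
    unfolding I_def by auto
  ultimately have "G = (\<Union>(s, t, q)\<in>I. M1.mball s q \<times> M2.mball t q)"
    by auto
  also have "\<dots> \<in> sets (borel_of M1.mtopology \<Otimes>\<^sub>M borel_of M2.mtopology)"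
    by (rule sets.countable_UN''[OF \<open>countable I\<close>])
      (auto intro: openin_in_borel_of)
  finally show ?thesis .
qed

lemma box_open_box_thickening:
  assumes "C \<subseteq> M1 \<times> M2"
  shows "box_open M1 d1 M2 d2 {(x, y) \<in> M1 \<times> M2. \<exists>(x0, y0)\<in>C. d1 x x0 < g \<and> d2 y y0 < g}"
  unfolding box_open_def
proof safe
  fix x y x0 y0 assume xy: "x \<in> M1" "y \<in> M2" "(x0, y0) \<in> C" "d1 x x0 < g" "d2 y y0 < g"
  let ?r = "min (g - d1 x x0) (g - d2 y y0)"
  have "(x', y') \<in> {(x, y) \<in> M1 \<times> M2. \<exists>(x0, y0)\<in>C. d1 x x0 < g \<and> d2 y y0 < g}"
    if "x' \<in> M1" "y' \<in> M2" "d1 x x' < ?r" "d2 y y' < ?r" for x' y'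
    using that xy assms M1.triangle[of x' x x0] M2.triangle[of y' y y0]
      M1.commute[of x x'] M2.commute[of y y'] by force
  then show "\<exists>r>0. \<forall>x'\<in>M1. \<forall>y'\<in>M2. d1 x x' < r \<longrightarrow> d2 y y' < r \<longrightarrow>
      (x', y') \<in> {(x, y) \<in> M1 \<times> M2. \<exists>(x0, y0)\<in>C. d1 x x0 < g \<and> d2 y y0 < g}"
    using xy by (intro exI[of _ ?r]) auto
qed

lemma box_open_nbhd_snd:
  assumes G: "box_open M1 d1 M2 d2 G"
  shows "box_open M1 d1 M2 d2 (SIGMA x:M1. nbhd M2 d2 (Pair x -` G) r)"
  unfolding box_open_def
proof (intro conjI ballI, force simp: nbhd_altdef, clarify)
  fix x y assume "x \<in> M1" "y \<in> nbhd M2 d2 (Pair x -` G) r"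
  then obtain y1 where xy: "x \<in> M1" "y \<in> M2" "(x, y1) \<in> G" "d2 y y1 < r"
    by (auto simp: nbhd_altdef)
  then obtain r1 where r1: "r1 > 0"
    and box: "\<forall>x'\<in>M1. \<forall>y'\<in>M2. d1 x x' < r1 \<longrightarrow> d2 y1 y' < r1 \<longrightarrow> (x', y') \<in> G"
    using box_openD[OF G] by blast
  have y1: "y1 \<in> M2" using xy G by (auto simp: box_open_def)
  let ?s = "min r1 (r - d2 y y1)"
  have "y' \<in> nbhd M2 d2 (Pair x' -` G) r"
    if "x' \<in> M1" "y' \<in> M2" "d1 x x' < ?s" "d2 y y' < ?s" for x' y'
  proof -
    have "(x', y1) \<in> G" using box that y1 r1 by simp
    moreover have "d2 y' y1 < r"
      using M2.triangle[of y' y y1] M2.commute[of y y'] that xy y1 by auto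
    ultimately show ?thesis using that by (auto simp: nbhd_altdef)
  qed
  then show "\<exists>s>0. \<forall>x'\<in>M1. \<forall>y'\<in>M2. d1 x x' < s \<longrightarrow> d2 y y' < s \<longrightarrow>
      (x', y') \<in> (SIGMA x:M1. nbhd M2 d2 (Pair x -` G) r)"
    using r1 xy by (intro exI[of _ ?s]) auto
qed

lemma box_open_nbhd_fst:
  assumes "box_open M1 d1 M2 d2 G"
  shows "box_open M1 d1 M2 d2 (prod.swap ` (SIGMA y:M2. nbhd M1 d1 ((\<lambda>x. (x, y)) -` G) r))"
proof -
  interpret swapped: Metric_space12 M2 d2 M1 d1 ..
  have "Pair y -` prod.swap ` G = (\<lambda>x. (x, y)) -` G" for y
    by force
  then show ?thesis
    using swapped.box_open_nbhd_snd[of "prod.swap ` G" r] assms by (simp add: box_open_swap)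
qed

lemma box_open_nbhd_prod_metric_F:
  assumes F: "F2 F" and C: "C \<subseteq> M1 \<times> M2"
  shows "box_open M1 d1 M2 d2 (nbhd (M1 \<times> M2) (prod_metric_F F d1 d2) C c)"
  unfolding box_open_def
proof (intro conjI ballI, force simp: nbhd_altdef, clarify)
  fix x y assume "(x, y) \<in> nbhd (M1 \<times> M2) (prod_metric_F F d1 d2) C c"
  then obtain x0 y0 where xy: "x \<in> M1" "y \<in> M2" "(x0, y0) \<in> C" "F (d1 x x0) (d2 y y0) < c"
    by (auto simp: nbhd_altdef prod_metric_F_def)
  have x0: "x0 \<in> M1" "y0 \<in> M2" using xy(3) C by auto
  obtain r where r: "r > 0" and near: "\<And>u v. 0 \<le> u \<Longrightarrow> 0 \<le> v \<Longrightarrow> \<bar>u - d1 x x0\<bar> < r \<Longrightarrow>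
      \<bar>v - d2 y y0\<bar> < r \<Longrightarrow> F u v < c"
    using F2_less_nearby[OF F M1.nonneg M2.nonneg xy(4)] by blast
  have "(x', y') \<in> nbhd (M1 \<times> M2) (prod_metric_F F d1 d2) C c"
    if "x' \<in> M1" "y' \<in> M2" "d1 x x' < r" "d2 y y' < r" for x' y'
  proof -
    have "\<bar>d1 x' x0 - d1 x x0\<bar> < r" "\<bar>d2 y' y0 - d2 y y0\<bar> < r"
      using M1.mdist_reverse_triangle[of x' x0 x] M2.mdist_reverse_triangle[of y' y0 y]
        that xy x0 M1.commute[of x x'] M2.commute[of y y'] M1.commute[of x0 x] M2.commute[of y0 y]
      by auto
    then have "F (d1 x' x0) (d2 y' y0) < c"
      by (intro near) auto
    then show ?thesis
      using that xy(3) by (force simp: nbhd_altdef prod_metric_F_def)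
  qed
  then show "\<exists>r>0. \<forall>x'\<in>M1. \<forall>y'\<in>M2. d1 x x' < r \<longrightarrow> d2 y y' < r \<longrightarrow>
      (x', y') \<in> nbhd (M1 \<times> M2) (prod_metric_F F d1 d2) C c"
    using r by blast
qed

end

lemma emeasure_le_add_iff_measure:
  assumes "finite_measure M" "finite_measure N" "0 \<le> k"
  shows "emeasure M A \<le> emeasure N B + ennreal k \<longleftrightarrow> measure M A - k \<le> measure N B"
  using assms
  by (simp add: finite_measure.emeasure_eq_measure ennreal_le_iff diff_le_eq flip: ennreal_plus)

lemma emeasure_pair_measure_le_Pair1:
  assumes "prob_space M" "sigma_finite_measure N" "sigma_finite_measure N'"
    and G: "G \<in> sets (M \<Otimes>\<^sub>M N')" and H: "H \<in> sets (M \<Otimes>\<^sub>M N)"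
    and le: "\<And>x. x \<in> space M \<Longrightarrow> emeasure N' (Pair x -` G) \<le> emeasure N (Pair x -` H) + c"
  shows "emeasure (M \<Otimes>\<^sub>M N') G \<le> emeasure (M \<Otimes>\<^sub>M N) H + c"
proof -
  interpret M: prob_space M by fact
  interpret N: sigma_finite_measure N by fact
  interpret N': sigma_finite_measure N' by fact
  interpret MN: pair_sigma_finite M N by unfold_locales
  have "emeasure (M \<Otimes>\<^sub>M N') G = (\<integral>\<^sup>+x. emeasure N' (Pair x -` G) \<partial>M)"
    using G by (rule N'.emeasure_pair_measure_alt)
  also have "\<dots> \<le> (\<integral>\<^sup>+x. emeasure N (Pair x -` H) + c \<partial>M)"
    using le by (rule nn_integral_mono)
  also have "\<dots> = (\<integral>\<^sup>+x. emeasure N (Pair x -` H) \<partial>M) + c"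
    using H by (simp add: nn_integral_add MN.measurable_emeasure_Pair1 M.emeasure_space_1)
  also have "(\<integral>\<^sup>+x. emeasure N (Pair x -` H) \<partial>M) = emeasure (M \<Otimes>\<^sub>M N) H"
    using H by (rule N.emeasure_pair_measure_alt[symmetric])
  finally show ?thesis .
qed

lemma emeasure_pair_measure_le_Pair2:
  assumes "prob_space N" "sigma_finite_measure M" "sigma_finite_measure M'"
    and G: "G \<in> sets (M' \<Otimes>\<^sub>M N)" and H: "H \<in> sets (M \<Otimes>\<^sub>M N)"
    and le: "\<And>y. y \<in> space N \<Longrightarrow>
      emeasure M' ((\<lambda>x. (x, y)) -` G) \<le> emeasure M ((\<lambda>x. (x, y)) -` H) + c"
  shows "emeasure (M' \<Otimes>\<^sub>M N) G \<le> emeasure (M \<Otimes>\<^sub>M N) H + c"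
proof -
  interpret N: prob_space N by fact
  interpret M'N: pair_sigma_finite M' N
    using assms by (simp add: pair_sigma_finite_def N.sigma_finite_measure_axioms)
  interpret MN: pair_sigma_finite M N
    using assms by (simp add: pair_sigma_finite_def N.sigma_finite_measure_axioms)
  have "emeasure (M' \<Otimes>\<^sub>M N) G = (\<integral>\<^sup>+y. emeasure M' ((\<lambda>x. (x, y)) -` G) \<partial>N)"
    using G by (rule M'N.emeasure_pair_measure_alt2)
  also have "\<dots> \<le> (\<integral>\<^sup>+y. emeasure M ((\<lambda>x. (x, y)) -` H) + c \<partial>N)"
    using le by (rule nn_integral_mono)
  also have "\<dots> = (\<integral>\<^sup>+y. emeasure M ((\<lambda>x. (x, y)) -` H) \<partial>N) + c"
    using H by (simp add: nn_integral_add MN.measurable_emeasure_Pair2 N.emeasure_space_1)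
  also have "(\<integral>\<^sup>+y. emeasure M ((\<lambda>x. (x, y)) -` H) \<partial>N) = emeasure (M \<Otimes>\<^sub>M N) H"
    using H by (rule MN.emeasure_pair_measure_alt2[symmetric])
  finally show ?thesis .
qed

context Metric_space12
begin

lemma emeasure_pair_measure_le_nbhd_snd:
  assumes "separable_space M1.mtopology" "separable_space M2.mtopology"
    and \<mu>: "prob_space \<mu>" "sets \<mu> = sets (borel_of M1.mtopology)"
    and \<nu>: "prob_space \<nu>" "sets \<nu> = sets (borel_of M2.mtopology)"
    and \<nu>': "prob_space \<nu>'" "sets \<nu>' = sets (borel_of M2.mtopology)"
    and "0 \<le> l" and adm: "prokhorov_admissible l M2 d2 \<nu> \<nu>' \<delta>"
    and G: "box_open M1 d1 M2 d2 G"
  shows "emeasure (\<mu> \<Otimes>\<^sub>M \<nu>') G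
    \<le> emeasure (\<mu> \<Otimes>\<^sub>M \<nu>) (SIGMA x:M1. nbhd M2 d2 (Pair x -` G) \<delta>) + ennreal (l * \<delta>)"
proof -
  interpret \<nu>: prob_space \<nu> by fact
  interpret \<nu>': prob_space \<nu>' by fact
  let ?D = "(SIGMA x:M1. nbhd M2 d2 (Pair x -` G) \<delta>)"
  have "sets (\<mu> \<Otimes>\<^sub>M \<nu>') = sets (borel_of M1.mtopology \<Otimes>\<^sub>M borel_of M2.mtopology)"
    "sets (\<mu> \<Otimes>\<^sub>M \<nu>) = sets (borel_of M1.mtopology \<Otimes>\<^sub>M borel_of M2.mtopology)"
    by (rule sets_pair_measure_cong[OF \<mu>(2) \<nu>'(2)], rule sets_pair_measure_cong[OF \<mu>(2) \<nu>(2)])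
  moreover have G_meas: "G \<in> sets (borel_of M1.mtopology \<Otimes>\<^sub>M borel_of M2.mtopology)"
    by (rule box_open_in_sets_pair_measure[OF assms(1,2) G])
  moreover have "?D \<in> sets (borel_of M1.mtopology \<Otimes>\<^sub>M borel_of M2.mtopology)"
    by (rule box_open_in_sets_pair_measure[OF assms(1,2) box_open_nbhd_snd[OF G]])
  ultimately have meas: "G \<in> sets (\<mu> \<Otimes>\<^sub>M \<nu>')" "?D \<in> sets (\<mu> \<Otimes>\<^sub>M \<nu>)"
    by simp_all
  have "emeasure \<nu>' (Pair x -` G) \<le> emeasure \<nu> (Pair x -` ?D) + ennreal (l * \<delta>)"
    if "x \<in> space \<mu>" for x
  proof -
    have "x \<in> M1"
      using that sets_eq_imp_space_eq[OF \<mu>(2)] by (simp add: space_borel_of)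
    then have "Pair x -` ?D = nbhd M2 d2 (Pair x -` G) \<delta>"
      by (simp only: Pair_vimage_Sigma if_True)
    moreover have "Pair x -` G \<in> sets (borel_of M2.mtopology)"
      by (rule sets_Pair1[OF G_meas])
    ultimately have "measure \<nu>' (Pair x -` G) - l * \<delta> \<le> measure \<nu> (Pair x -` ?D)"
      using adm by (simp add: prokhorov_admissible_def)
    then show ?thesis
      using \<open>0 \<le> l\<close> adm emeasure_le_add_iff_measure[OF \<nu>'.finite_measure_axioms \<nu>.finite_measure_axioms]
      by (simp add: prokhorov_admissible_def)
  qed
  with meas show ?thesis
    by (intro emeasure_pair_measure_le_Pair1 \<mu>(1) prob_space_imp_sigma_finite \<nu>(1) \<nu>'(1))
qed

lemma emeasure_pair_measure_le_nbhd_fst: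
  assumes "separable_space M1.mtopology" "separable_space M2.mtopology"
    and \<mu>: "prob_space \<mu>" "sets \<mu> = sets (borel_of M1.mtopology)"
    and \<mu>': "prob_space \<mu>'" "sets \<mu>' = sets (borel_of M1.mtopology)"
    and \<nu>: "prob_space \<nu>" "sets \<nu> = sets (borel_of M2.mtopology)"
    and "0 \<le> l" and adm: "prokhorov_admissible l M1 d1 \<mu> \<mu>' \<epsilon>"
    and G: "box_open M1 d1 M2 d2 G"
  shows "emeasure (\<mu>' \<Otimes>\<^sub>M \<nu>) G
    \<le> emeasure (\<mu> \<Otimes>\<^sub>M \<nu>) (prod.swap ` (SIGMA y:M2. nbhd M1 d1 ((\<lambda>x. (x, y)) -` G) \<epsilon>))
       + ennreal (l * \<epsilon>)"
proof -
  interpret \<mu>: prob_space \<mu> by fact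
  interpret \<mu>': prob_space \<mu>' by fact
  let ?E = "prod.swap ` (SIGMA y:M2. nbhd M1 d1 ((\<lambda>x. (x, y)) -` G) \<epsilon>)"
  have "sets (\<mu>' \<Otimes>\<^sub>M \<nu>) = sets (borel_of M1.mtopology \<Otimes>\<^sub>M borel_of M2.mtopology)"
    "sets (\<mu> \<Otimes>\<^sub>M \<nu>) = sets (borel_of M1.mtopology \<Otimes>\<^sub>M borel_of M2.mtopology)"
    by (rule sets_pair_measure_cong[OF \<mu>'(2) \<nu>(2)], rule sets_pair_measure_cong[OF \<mu>(2) \<nu>(2)])
  moreover have G_meas: "G \<in> sets (borel_of M1.mtopology \<Otimes>\<^sub>M borel_of M2.mtopology)"
    by (rule box_open_in_sets_pair_measure[OF assms(1,2) G])
  moreover have "?E \<in> sets (borel_of M1.mtopology \<Otimes>\<^sub>M borel_of M2.mtopology)"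
    by (rule box_open_in_sets_pair_measure[OF assms(1,2) box_open_nbhd_fst[OF G]])
  ultimately have meas: "G \<in> sets (\<mu>' \<Otimes>\<^sub>M \<nu>)" "?E \<in> sets (\<mu> \<Otimes>\<^sub>M \<nu>)"
    by simp_all
  have "emeasure \<mu>' ((\<lambda>x. (x, y)) -` G) \<le> emeasure \<mu> ((\<lambda>x. (x, y)) -` ?E) + ennreal (l * \<epsilon>)"
    if "y \<in> space \<nu>" for y
  proof -
    have "y \<in> M2"
      using that sets_eq_imp_space_eq[OF \<nu>(2)] by (simp add: space_borel_of)
    then have "(\<lambda>x. (x, y)) -` ?E = nbhd M1 d1 ((\<lambda>x. (x, y)) -` G) \<epsilon>"
      by force
    moreover have "(\<lambda>x. (x, y)) -` G \<in> sets (borel_of M1.mtopology)"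
      by (rule sets_Pair2[OF G_meas])
    ultimately have "measure \<mu>' ((\<lambda>x. (x, y)) -` G) - l * \<epsilon> \<le> measure \<mu> ((\<lambda>x. (x, y)) -` ?E)"
      using adm by (simp add: prokhorov_admissible_def)
    then show ?thesis
      using \<open>0 \<le> l\<close> adm emeasure_le_add_iff_measure[OF \<mu>'.finite_measure_axioms \<mu>.finite_measure_axioms]
      by (simp add: prokhorov_admissible_def)
  qed
  with meas show ?thesis
    by (intro emeasure_pair_measure_le_Pair2 \<nu>(1) prob_space_imp_sigma_finite \<mu>(1) \<mu>'(1))
qed

lemma measure_pair_measure_le_nbhd_prod_metric_F:
  assumes sep: "separable_space M1.mtopology" "separable_space M2.mtopology"
    and F: "F2 F"
    and \<mu>: "prob_space \<mu>" "sets \<mu> = sets (borel_of M1.mtopology)"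
    and \<mu>': "prob_space \<mu>'" "sets \<mu>' = sets (borel_of M1.mtopology)"
    and \<nu>: "prob_space \<nu>" "sets \<nu> = sets (borel_of M2.mtopology)"
    and \<nu>': "prob_space \<nu>'" "sets \<nu>' = sets (borel_of M2.mtopology)"
    and "0 \<le> l"
    and adm1: "prokhorov_admissible l M1 d1 \<mu> \<mu>' \<epsilon>"
    and adm2: "prokhorov_admissible l M2 d2 \<nu> \<nu>' \<delta>"
    and F_less: "\<And>u v. 0 \<le> u \<Longrightarrow> u < \<epsilon> + g \<Longrightarrow> 0 \<le> v \<Longrightarrow> v < \<delta> + g \<Longrightarrow> F u v < c"
    and "\<epsilon> + \<delta> \<le> c" and "0 < g"
    and C: "C \<in> sets (\<mu>' \<Otimes>\<^sub>M \<nu>')"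
  shows "measure (\<mu>' \<Otimes>\<^sub>M \<nu>') C - l * c
    \<le> measure (\<mu> \<Otimes>\<^sub>M \<nu>) (nbhd (M1 \<times> M2) (prod_metric_F F d1 d2) C c)"
proof -
  let ?B = "borel_of M1.mtopology \<Otimes>\<^sub>M borel_of M2.mtopology"
  have sets_eq: "sets (\<mu>' \<Otimes>\<^sub>M \<nu>') = sets ?B" "sets (\<mu> \<Otimes>\<^sub>M \<nu>) = sets ?B"
    by (rule sets_pair_measure_cong[OF \<mu>'(2) \<nu>'(2)], rule sets_pair_measure_cong[OF \<mu>(2) \<nu>(2)])
  have "C \<subseteq> M1 \<times> M2"
    using sets.sets_into_space[of C ?B] C by (simp add: sets_eq space_pair_measure space_borel_of)
  \<comment> \<open>\<open>C\<close> is first thickened to an open set, so that the section neighbourhoods built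
    from it are again open, hence product-measurable.\<close>
  define T where "T = {(x, y) \<in> M1 \<times> M2. \<exists>(x0, y0)\<in>C. d1 x x0 < g \<and> d2 y y0 < g}"
  define D where "D = (SIGMA x:M1. nbhd M2 d2 (Pair x -` T) \<delta>)"
  define E where "E = prod.swap ` (SIGMA y:M2. nbhd M1 d1 ((\<lambda>x. (x, y)) -` D) \<epsilon>)"
  define N where "N = nbhd (M1 \<times> M2) (prod_metric_F F d1 d2) C c"
  have T: "box_open M1 d1 M2 d2 T"
    unfolding T_def using \<open>C \<subseteq> M1 \<times> M2\<close> by (rule box_open_box_thickening)
  have "C \<subseteq> T"
    using \<open>C \<subseteq> M1 \<times> M2\<close> \<open>0 < g\<close> by (force simp: T_def)
  have "N \<in> sets ?B"
    unfolding N_def using sep F \<open>C \<subseteq> M1 \<times> M2\<close>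
    by (intro box_open_in_sets_pair_measure box_open_nbhd_prod_metric_F)
  have "E \<subseteq> N"
  proof clarify
    fix x y assume "(x, y) \<in> E"
    then obtain x1 y1 x0 y0 where "x \<in> M1" "y \<in> M2" "x1 \<in> M1" "d1 x x1 < \<epsilon>" "y1 \<in> M2" "d2 y y1 < \<delta>"
      "(x0, y0) \<in> C" "d1 x1 x0 < g" "d2 y1 y0 < g"
      unfolding E_def D_def T_def by (auto simp: nbhd_altdef)
    moreover have "d1 x x0 \<le> d1 x x1 + d1 x1 x0" "d2 y y0 \<le> d2 y y1 + d2 y1 y0"
      using calculation \<open>C \<subseteq> M1 \<times> M2\<close> M1.triangle M2.triangle by auto
    ultimately show "(x, y) \<in> N"
      using F_less[of "d1 x x0" "d2 y y0"] by (force simp: N_def nbhd_altdef prod_metric_F_def)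
  qed
  have "emeasure (\<mu>' \<Otimes>\<^sub>M \<nu>') C \<le> emeasure (\<mu>' \<Otimes>\<^sub>M \<nu>') T"
    using C \<open>C \<subseteq> T\<close> box_open_in_sets_pair_measure[OF sep T] by (intro emeasure_mono) (simp_all add: sets_eq)
  also have "\<dots> \<le> emeasure (\<mu>' \<Otimes>\<^sub>M \<nu>) D + ennreal (l * \<delta>)"
    unfolding D_def by (rule emeasure_pair_measure_le_nbhd_snd[OF sep \<mu>' \<nu> \<nu>' \<open>0 \<le> l\<close> adm2 T])
  also have "\<dots> \<le> emeasure (\<mu> \<Otimes>\<^sub>M \<nu>) E + ennreal (l * \<epsilon>) + ennreal (l * \<delta>)"
    unfolding E_def D_def
    by (intro add_right_mono emeasure_pair_measure_le_nbhd_fst[OF sep \<mu> \<mu>' \<nu> \<open>0 \<le> l\<close> adm1]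
        box_open_nbhd_snd T)
  also have "\<dots> \<le> emeasure (\<mu> \<Otimes>\<^sub>M \<nu>) N + ennreal (l * c)"
  proof -
    have "ennreal (l * \<epsilon>) + ennreal (l * \<delta>) \<le> ennreal (l * c)"
      using adm1 adm2 \<open>0 \<le> l\<close> \<open>\<epsilon> + \<delta> \<le> c\<close>
      by (simp add: prokhorov_admissible_def mult_left_mono flip: ennreal_plus distrib_left)
    moreover have "emeasure (\<mu> \<Otimes>\<^sub>M \<nu>) E \<le> emeasure (\<mu> \<Otimes>\<^sub>M \<nu>) N"
      using \<open>E \<subseteq> N\<close> \<open>N \<in> sets ?B\<close> by (intro emeasure_mono) (simp_all add: sets_eq)
    ultimately show ?thesis
      by (simp add: add.assoc add_mono)
  qed
  finally show ?thesis
    unfolding N_def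
    using \<open>0 \<le> l\<close> adm1 adm2 \<open>\<epsilon> + \<delta> \<le> c\<close> prob_space_pair[OF \<mu>'(1) \<nu>'(1)] prob_space_pair[OF \<mu>(1) \<nu>(1)]
    by (subst (asm) emeasure_le_add_iff_measure)
      (auto simp: prob_space_def prokhorov_admissible_def)
qed

lemma prokhorov_admissible_pair_measure:
  assumes "separable_space M1.mtopology" "separable_space M2.mtopology"
    and "F2 F"
    and "prob_space \<mu>" "sets \<mu> = sets (borel_of M1.mtopology)"
    and "prob_space \<mu>'" "sets \<mu>' = sets (borel_of M1.mtopology)"
    and "prob_space \<nu>" "sets \<nu> = sets (borel_of M2.mtopology)"
    and "prob_space \<nu>'" "sets \<nu>' = sets (borel_of M2.mtopology)"
    and "0 \<le> l"
    and adm1: "prokhorov_admissible l M1 d1 \<mu> \<mu>' \<epsilon>"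
    and adm2: "prokhorov_admissible l M2 d2 \<nu> \<nu>' \<delta>"
    and "\<And>u v. 0 \<le> u \<Longrightarrow> u < \<epsilon> + g \<Longrightarrow> 0 \<le> v \<Longrightarrow> v < \<delta> + g \<Longrightarrow> F u v < c"
    and "\<epsilon> + \<delta> \<le> c" and "0 < g"
  shows "prokhorov_admissible l (M1 \<times> M2) (prod_metric_F F d1 d2) (\<mu> \<Otimes>\<^sub>M \<nu>) (\<mu>' \<Otimes>\<^sub>M \<nu>') c"
proof -
  have "0 < c"
    using adm1 adm2 \<open>\<epsilon> + \<delta> \<le> c\<close> by (simp add: prokhorov_admissible_def)
  have "measure (\<mu>' \<Otimes>\<^sub>M \<nu>') C - l * c
      \<le> measure (\<mu> \<Otimes>\<^sub>M \<nu>) (nbhd (M1 \<times> M2) (prod_metric_F F d1 d2) C c)" for C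
  proof (cases "C \<in> sets (\<mu>' \<Otimes>\<^sub>M \<nu>')")
    case True
    show ?thesis
      using assms True by (rule measure_pair_measure_le_nbhd_prod_metric_F)
  next
    case False
    \<comment> \<open>a Borel set for \<open>d\<^sub>F\<close> outside the product \<open>\<sigma>\<close>-algebra has junk measure \<open>0\<close>\<close>
    then have "measure (\<mu>' \<Otimes>\<^sub>M \<nu>') C = 0"
      by (simp add: measure_notin_sets)
    moreover have "0 \<le> l * c"
      using \<open>0 \<le> l\<close> \<open>0 < c\<close> by simp
    ultimately show ?thesis
      using measure_nonneg[of "\<mu> \<Otimes>\<^sub>M \<nu>" "nbhd (M1 \<times> M2) (prod_metric_F F d1 d2) C c"]
      by linarith
  qed
  with \<open>0 < c\<close> show ?thesis
    by (simp add: prokhorov_admissible_def)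
qed

lemma prokhorov_pair_measure_le_max_plus:
  assumes "separable_space M1.mtopology" "separable_space M2.mtopology"
    and "F2 F"
    and "prob_space \<mu>" "sets \<mu> = sets (borel_of M1.mtopology)"
    and "prob_space \<mu>'" "sets \<mu>' = sets (borel_of M1.mtopology)"
    and "prob_space \<nu>" "sets \<nu> = sets (borel_of M2.mtopology)"
    and "prob_space \<nu>'" "sets \<nu>' = sets (borel_of M2.mtopology)"
    and "0 < l" and "0 < \<eta>"
    and a: "a = prokhorov l M1 d1 \<mu> \<mu>'" and b: "b = prokhorov l M2 d2 \<nu> \<nu>'"
  shows "prokhorov l (M1 \<times> M2) (prod_metric_F F d1 d2) (\<mu> \<Otimes>\<^sub>M \<nu>) (\<mu>' \<Otimes>\<^sub>M \<nu>')
    \<le> max (a + b) (2 * F a b) + \<eta>"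
proof -
  have "0 \<le> a" "0 \<le> b"
    unfolding a b by (intro prokhorov_nonneg assms(6,10,12))+
  have "F a b < F a b + \<eta> / 2"
    using \<open>0 < \<eta>\<close> by simp
  then obtain \<rho> where "\<rho> > 0" and near: "\<And>u v. 0 \<le> u \<Longrightarrow> 0 \<le> v \<Longrightarrow> \<bar>u - a\<bar> < \<rho> \<Longrightarrow>
      \<bar>v - b\<bar> < \<rho> \<Longrightarrow> F u v < F a b + \<eta> / 2"
    using F2_less_nearby[OF \<open>F2 F\<close> \<open>0 \<le> a\<close> \<open>0 \<le> b\<close>] by blast
  define t where "t = min \<rho> \<eta> / 4"
  have t: "0 < t" "2 * t < \<rho>" "2 * t \<le> \<eta> / 2"
    using \<open>\<rho> > 0\<close> \<open>0 < \<eta>\<close> by (auto simp: t_def)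
  have adm_a: "prokhorov_admissible l M1 d1 \<mu> \<mu>' (a + t)"
    using t by (intro prokhorov_admissible_above M1.Metric_space_axioms assms(12,4-6)) (simp add: a)
  have adm_b: "prokhorov_admissible l M2 d2 \<nu> \<nu>' (b + t)"
    using t by (intro prokhorov_admissible_above M2.Metric_space_axioms assms(12,8-10)) (simp add: b)
  have F_less: "F u v < max (a + b) (2 * F a b) + \<eta>"
    if "0 \<le> u" "u < a + t + t" "0 \<le> v" "v < b + t + t" for u v
  proof -
    have "u \<le> 2 * (a + 2 * t)" "0 < a + 2 * t" "v \<le> 2 * (b + 2 * t)" "0 < b + 2 * t"
      using that \<open>0 \<le> a\<close> \<open>0 \<le> b\<close> t by auto
    then have "F u v \<le> 2 * F (a + 2 * t) (b + 2 * t)"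
      using F2_le_twice[OF \<open>F2 F\<close> \<open>0 \<le> u\<close> _ _ \<open>0 \<le> v\<close>] by blast
    moreover have "F (a + 2 * t) (b + 2 * t) < F a b + \<eta> / 2"
      by (rule near) (use \<open>0 \<le> a\<close> \<open>0 \<le> b\<close> t in simp_all)
    ultimately show ?thesis by linarith
  qed
  have "0 \<le> l" "a + t + (b + t) \<le> max (a + b) (2 * F a b) + \<eta>"
    using assms(12) t by auto
  then have "prokhorov_admissible l (M1 \<times> M2) (prod_metric_F F d1 d2)
      (\<mu> \<Otimes>\<^sub>M \<nu>) (\<mu>' \<Otimes>\<^sub>M \<nu>') (max (a + b) (2 * F a b) + \<eta>)"
    by (intro prokhorov_admissible_pair_measure[OF assms(1-11) _ adm_a adm_b F_less _ t(1)])
  then show ?thesis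
    by (rule prokhorov_le)
qed

end

theorem mainTheorem15:
  fixes X :: "'a set" and dX :: "'a \<Rightarrow> 'a \<Rightarrow> real"
    and Y :: "'b set" and dY :: "'b \<Rightarrow> 'b \<Rightarrow> real"
    and F :: "real \<Rightarrow> real \<Rightarrow> real"
    and \<mu> \<mu>' :: "'a measure" and \<nu> \<nu>' :: "'b measure" and l :: real
  assumes "Metric_space X dX" and "separable_space (Metric_space.mtopology X dX)"
    and "Metric_space Y dY" and "separable_space (Metric_space.mtopology Y dY)"
    and "F2 F"
    and "prob_space \<mu>" and "sets \<mu> = sets (borel_of (Metric_space.mtopology X dX))"
    and "prob_space \<mu>'" and "sets \<mu>' = sets (borel_of (Metric_space.mtopology X dX))"
    and "prob_space \<nu>" and "sets \<nu> = sets (borel_of (Metric_space.mtopology Y dY))"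
    and "prob_space \<nu>'" and "sets \<nu>' = sets (borel_of (Metric_space.mtopology Y dY))"
    and "l > 0"
  shows "prokhorov l (X \<times> Y) (prod_metric_F F dX dY) (\<mu> \<Otimes>\<^sub>M \<nu>) (\<mu>' \<Otimes>\<^sub>M \<nu>')
         \<le> max (prokhorov l X dX \<mu> \<mu>' + prokhorov l Y dY \<nu> \<nu>')
                (2 * F (prokhorov l X dX \<mu> \<mu>') (prokhorov l Y dY \<nu> \<nu>'))"
proof (rule field_le_epsilon)
  interpret Metric_space12 X dX Y dY
    using assms(1,3) by (simp add: Metric_space12_def)
  fix \<eta> :: real assume "0 < \<eta>"
  with assms show "prokhorov l (X \<times> Y) (prod_metric_F F dX dY) (\<mu> \<Otimes>\<^sub>M \<nu>) (\<mu>' \<Otimes>\<^sub>M \<nu>')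
      \<le> max (prokhorov l X dX \<mu> \<mu>' + prokhorov l Y dY \<nu> \<nu>')
          (2 * F (prokhorov l X dX \<mu> \<mu>') (prokhorov l Y dY \<nu> \<nu>')) + \<eta>"
    by (intro prokhorov_pair_measure_le_max_plus) auto
qed

end
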